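(* Let $G$ be a finite simple graph on $[d]$, let $k\ge1$, let $<$ be a monomial order on $R[G]$, and let $\{m_1,\dots,m_s\}$ be the set of all standard monomials of degree $k$ with respect to the initial ideal ${\rm in}_<(K_G)$. Each such $m_i$ is of the form $x_{S_1}\cdots x_{S_k}$ with $S_1,\dots,S_k$ pairwise disjoint stable sets, and hence equals ${\bf x}_{f_i}$ for the $k$-coloring $f_i$ of $G[S_1\cup\dots\cup S_k]$ given by $f_i(v)=\ell$ for $v\in S_\ell$. Then the set of those $f_i$ that are $k$-colorings of $G$ itself (i.e. with $S_1\cup\dots\cup S_k=[d]$) is a complete representative system for the set ${\rm kc}(G,k)$ of $k$-Kempe classes of $G$.
   Context: A $k$-coloring of a graph $H$ is a map $f:V(H)\to[k]$ (not necessarily surjective) with $f(u)\neq f(v)$ for every edge $\{u,v\}$. A Kempe switching of a $k$-coloring $f$: choose colors $i<j$ and a connected component $C$ of $H[f^{-1}(i)\cup f^{-1}(j)]$, and interchange $i$ and $j$ on $C$. Two $k$-colorings are Kempe equivalent ($\sim_k$) if one is obtained from the other by a finite sequence of Kempe switchings; ${\rm kc}(H,k)$ is the set of equivalence classes (the $k$-Kempe classes) of the set of $k$-colorings of $H$. Colorings differing only by a permutation of the colors are identified. A stable set of $G$ is a subset of $[d]$ containing no edge (including $\emptyset$ and singletons); $S(G)$ is the set of stable sets; $R[G]=\mathbb{K}[x_S:S\in S(G)]$ over a field $\mathbb{K}$, all variables of degree $1$. For a $k$-coloring $f$ of an induced subgraph $G[W]$, ${\bf x}_f=\prod_{\ell=1}^k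 x_{f^{-1}(\ell)}$. $J_G$ is the ideal generated by all ${\bf x}_f-{\bf x}_g$ with $f,g$ $2$-colorings of a common induced subgraph of $G$; $M_G=\langle x_Sx_T : S,T\in S(G),\ S\cap T\neq\emptyset\rangle$; the Kempe ideal is $K_G=J_G+M_G$. For a monomial order $<$, ${\rm in}_<(I)$ is the ideal generated by the leading monomials of nonzero elements of $I$, and a monomial is standard if it does not lie in ${\rm in}_<(I)$. *)

theory Defs
  imports Main "HOL-Library.Poly_Mapping" "HOL-Combinatorics.Permutations"
begin

definition simple_graph :: "nat \<Rightarrow> nat set set \<Rightarrow> bool" where
  "simple_graph d E \<longleftrightarrow> (\<forall>e\<in>E. \<exists>u v. e = {u, v} \<and> u \<noteq> v \<and> u \<in> {1..d} \<and> v \<in> {1..d})"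

definition stable_sets :: "nat \<Rightarrow> nat set set \<Rightarrow> nat set set" where
  "stable_sets d E = {S. S \<subseteq> {1..d} \<and> (\<forall>e\<in>E. \<not> e \<subseteq> S)}"

text \<open>A k-coloring of the induced subgraph G[W] (values outside W irrelevant).\<close>
definition is_coloring :: "nat set set \<Rightarrow> nat set \<Rightarrow> nat \<Rightarrow> (nat \<Rightarrow> nat) \<Rightarrow> bool" where
  "is_coloring E W k f \<longleftrightarrow> (\<forall>v\<in>W. f v \<in> {1..k}) \<and> (\<forall>u\<in>W. \<forall>v\<in>W. {u, v} \<in> E \<longrightarrow> f u \<noteq> f v)"

definition adj_in :: "nat set set \<Rightarrow> nat set \<Rightarrow> nat \<Rightarrow> nat \<Rightarrow> bool" where
  "adj_in E X u v \<longleftrightarrow> u \<in> X \<and> v \<in> X \<and> {u, v} \<in> E"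

definition is_component :: "nat set set \<Rightarrow> nat set \<Rightarrow> nat set \<Rightarrow> bool" where
  "is_component E X C \<longleftrightarrow> (\<exists>u\<in>X. C = {v. (adj_in E X)\<^sup>*\<^sup>* u v})"

definition swap_colors :: "nat \<Rightarrow> nat \<Rightarrow> nat \<Rightarrow> nat" where
  "swap_colors i j c = (if c = i then j else if c = j then i else c)"

definition kempe_step :: "nat \<Rightarrow> nat set set \<Rightarrow> nat \<Rightarrow> (nat \<Rightarrow> nat) \<Rightarrow> (nat \<Rightarrow> nat) \<Rightarrow> bool" where
  "kempe_step d E k f g \<longleftrightarrow>
     (\<exists>i j C. 1 \<le> i \<and> i < j \<and> j \<le> k \<and>
        is_component E {v\<in>{1..d}. f v = i \<or> f v = j} C \<and>
        g = (\<lambda>v. if v \<in> C then swap_colors i j (f v) else f v))"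

text \<open>Kempe equivalence of k-colorings of G, where colorings differing only by a
  permutation of the colors (and values outside {1..d}) are identified.\<close>
definition kempe_equiv :: "nat \<Rightarrow> nat set set \<Rightarrow> nat \<Rightarrow> (nat \<Rightarrow> nat) \<Rightarrow> (nat \<Rightarrow> nat) \<Rightarrow> bool" where
  "kempe_equiv d E k f g \<longleftrightarrow>
     (\<exists>\<sigma> h. \<sigma> permutes {1..k} \<and> (kempe_step d E k)\<^sup>*\<^sup>* f h \<and> (\<forall>v\<in>{1..d}. h v = \<sigma> (g v)))"

type_synonym monom = "nat set \<Rightarrow>\<^sub>0 nat"
type_synonym 'k mpoly = "monom \<Rightarrow>\<^sub>0 'k"

text \<open>Monomials of R[G]: exponent vectors supported on stable sets.\<close>
definition monomials_RG :: "nat \<Rightarrow> nat set set \<Rightarrow> monom set" where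
  "monomials_RG d E = {m. Poly_Mapping.keys m \<subseteq> stable_sets d E}"

definition RG :: "nat \<Rightarrow> nat set set \<Rightarrow> ('k::field) mpoly set" where
  "RG d E = {p. Poly_Mapping.keys p \<subseteq> monomials_RG d E}"

definition monom_degree :: "monom \<Rightarrow> nat" where
  "monom_degree m = (\<Sum>S\<in>Poly_Mapping.keys m. Poly_Mapping.lookup m S)"

definition mon :: "monom \<Rightarrow> ('k::field) mpoly" where
  "mon m = Poly_Mapping.single m 1"

definition ideal_gen :: "('k::field) mpoly set \<Rightarrow> 'k mpoly set \<Rightarrow> 'k mpoly set" where
  "ideal_gen R B = {p. \<exists>A c. finite A \<and> A \<subseteq> B \<and> (\<forall>b\<in>A. c b \<in> R) \<and> p = (\<Sum>b\<in>A. c b * b)}"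

text \<open>Exponent vector of x_f = prod_{l=1..k} x_{f^{-1}(l)} for a k-coloring f of G[W].\<close>
definition xcol :: "nat set \<Rightarrow> nat \<Rightarrow> (nat \<Rightarrow> nat) \<Rightarrow> monom" where
  "xcol W k f = (\<Sum>l\<in>{1..k}. Poly_Mapping.single {v\<in>W. f v = l} 1)"

definition J_gens :: "nat \<Rightarrow> nat set set \<Rightarrow> ('k::field) mpoly set" where
  "J_gens d E = {mon (xcol W 2 f) - mon (xcol W 2 g) | W f g.
       W \<subseteq> {1..d} \<and> is_coloring E W 2 f \<and> is_coloring E W 2 g}"

definition M_gens :: "nat \<Rightarrow> nat set set \<Rightarrow> ('k::field) mpoly set" where
  "M_gens d E = {mon (Poly_Mapping.single S 1 + Poly_Mapping.single T 1) | S T.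
       S \<in> stable_sets d E \<and> T \<in> stable_sets d E \<and> S \<inter> T \<noteq> {}}"

definition kempe_ideal :: "nat \<Rightarrow> nat set set \<Rightarrow> ('k::field) mpoly set" where
  "kempe_ideal d E = ideal_gen (RG d E) (J_gens d E \<union> M_gens d E)"

definition monomial_order :: "monom set \<Rightarrow> (monom \<Rightarrow> monom \<Rightarrow> bool) \<Rightarrow> bool" where
  "monomial_order Mon lt \<longleftrightarrow>
     (\<forall>a\<in>Mon. \<not> lt a a) \<and>
     (\<forall>a\<in>Mon. \<forall>b\<in>Mon. \<forall>c\<in>Mon. lt a b \<longrightarrow> lt b c \<longrightarrow> lt a c) \<and>
     (\<forall>a\<in>Mon. \<forall>b\<in>Mon. a \<noteq> b \<longrightarrow> lt a b \<or> lt b a) \<and>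
     wfP (\<lambda>a b. a \<in> Mon \<and> b \<in> Mon \<and> lt a b) \<and>
     (\<forall>a\<in>Mon. \<forall>b\<in>Mon. \<forall>c\<in>Mon. lt a b \<longrightarrow> lt (a + c) (b + c)) \<and>
     (\<forall>a\<in>Mon. a \<noteq> 0 \<longrightarrow> lt 0 a)"

definition lead_monom :: "(monom \<Rightarrow> monom \<Rightarrow> bool) \<Rightarrow> ('k::field) mpoly \<Rightarrow> monom" where
  "lead_monom lt p = (THE m. m \<in> Poly_Mapping.keys p \<and> (\<forall>m'\<in>Poly_Mapping.keys p. m' \<noteq> m \<longrightarrow> lt m' m))"

definition initial_ideal :: "nat \<Rightarrow> nat set set \<Rightarrow> (monom \<Rightarrow> monom \<Rightarrow> bool) \<Rightarrow> ('k::field) mpoly set \<Rightarrow> 'k mpoly set" where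
  "initial_ideal d E lt I = ideal_gen (RG d E) {mon (lead_monom lt p) | p. p \<in> I \<and> p \<noteq> 0}"

definition std_monomials :: "('k::field) itself \<Rightarrow> nat \<Rightarrow> nat set set \<Rightarrow> (monom \<Rightarrow> monom \<Rightarrow> bool) \<Rightarrow> nat \<Rightarrow> monom set" where
  "std_monomials _ d E lt k = {m \<in> monomials_RG d E. monom_degree m = k \<and>
      (mon m :: 'k mpoly) \<notin> initial_ideal d E lt (kempe_ideal d E :: 'k mpoly set)}"

end

theory Submission
  imports Defs
begin

(* Fix a k-colouring g and let X be the set of monomials x_f, f Kempe equivalent to g.
   The coefficient sum over X is a linear functional that vanishes on K_G: multiplying a binomial
   generator x_a - x_b of J_G by a monomial u gives two monomials u x_a and u x_b that lie in X
   together or not at all (recolouring G[W] from a to b is a sequence of Kempe switchings), and no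
   multiple of a generator x_S x_T of M_G lies in X, since colour classes are disjoint. Hence the
   least element of X is standard: otherwise it is u times the leading monomial of some p in K_G,
   and u p would have a single, nonzero, term in X. All elements of X are congruent modulo K_G,
   so every other element of X is the leading monomial of a binomial in K_G. Finally, a standard
   monomial is not divisible by any x_S x_T with S and T overlapping, so it is a product of k
   pairwise disjoint stable sets. *)

lemma poly_mapping_sum_single:
  "p = (\<Sum>u\<in>Poly_Mapping.keys p. Poly_Mapping.single u (Poly_Mapping.lookup p u))"
  by (rule poly_mapping_eqI) (auto simp: lookup_sum lookup_single when_def in_keys_iff)

lemma lookup_single_one_mult:
  fixes p :: "'a::cancel_comm_monoid_add \<Rightarrow>\<^sub>0 'b::semiring_1"
  shows "Poly_Mapping.lookup (Poly_Mapping.single u 1 * p) (u + m) = Poly_Mapping.lookup p m"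
proof -
  have "Poly_Mapping.single u 1 * p =
      (\<Sum>w\<in>Poly_Mapping.keys p. Poly_Mapping.single (u + w) (Poly_Mapping.lookup p w))"
    by (subst poly_mapping_sum_single[of p]) (simp add: sum_distrib_left mult_single)
  then show ?thesis
    by (auto simp: lookup_sum lookup_single when_def in_keys_iff)
qed

lemma keys_single_one_mult:
  "Poly_Mapping.keys (Poly_Mapping.single u 1 * p) \<subseteq> (\<lambda>w. u + w) ` Poly_Mapping.keys p"
  using keys_mult[of "Poly_Mapping.single u 1" p] by (auto split: if_splits)

lemma lookup_sum_single_one:
  "finite L \<Longrightarrow>
    Poly_Mapping.lookup (\<Sum>l\<in>L. Poly_Mapping.single (Z l) (1::nat)) T = card {l\<in>L. Z l = T}"
  by (simp add: lookup_sum lookup_single when_def sum.If_cases Int_def)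

lemma keys_sum_single_one:
  "Poly_Mapping.keys (\<Sum>l\<in>L. Poly_Mapping.single (Z l) (1::nat)) \<subseteq> Z ` L"
  using keys_sum[of "\<lambda>l. Poly_Mapping.single (Z l) (1::nat)" L] by auto

lemma sum_single_one_eq_add_singlesE:
  assumes "finite L"
    and "(\<Sum>l\<in>L. Poly_Mapping.single (Z l) (1::nat)) =
      w + Poly_Mapping.single S 1 + Poly_Mapping.single T 1"
  obtains l1 l2 where "l1 \<in> L" "l2 \<in> L" "l1 \<noteq> l2" "Z l1 = S" "Z l2 = T"
proof -
  define L' where "L' U = {l\<in>L. Z l = U}" for U
  have card: "card (L' U) =
      Poly_Mapping.lookup w U + (if S = U then 1 else 0) + (if T = U then 1 else 0)" for U
    using arg_cong[OF assms(2), of "\<lambda>p. Poly_Mapping.lookup p U"]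
    unfolding lookup_sum_single_one[OF assms(1)] L'_def
    by (simp add: lookup_add lookup_single when_def)
  have fin: "finite (L' U)" for U
    using assms(1) unfolding L'_def by simp
  show thesis
  proof (cases "S = T")
    case True
    then have "\<not> card (L' S) \<le> Suc 0"
      using card[of S] by simp
    then obtain l1 l2 where "l1 \<in> L' S" "l2 \<in> L' S" "l1 \<noteq> l2"
      using card_le_Suc0_iff_eq[OF fin] by blast
    with True show thesis
      using that unfolding L'_def by blast
  next
    case False
    then have "L' S \<noteq> {}" "L' T \<noteq> {}"
      using card[of S] card[of T] by auto
    with False show thesis
      using that unfolding L'_def by blast
  qed
qed

lemma sum_remove_two:
  assumes "finite A" "i \<in> A" "j \<in> A" "i \<noteq> j"
  shows "sum F A = sum F (A - {i, j}) + F i + F j"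
proof -
  have "sum F A = F i + (F j + sum F (A - {i} - {j}))"
    using assms by (simp add: sum.remove[of A i] sum.remove[of "A - {i}" j])
  also have "A - {i} - {j} = A - {i, j}"
    by auto
  finally show ?thesis
    by (simp add: ac_simps)
qed

lemma monom_degree_eq_sum:
  assumes "finite F" "Poly_Mapping.keys m \<subseteq> F"
  shows "monom_degree m = (\<Sum>S\<in>F. Poly_Mapping.lookup m S)"
  unfolding monom_degree_def
  by (rule sum.mono_neutral_left[OF assms]) (simp add: in_keys_iff)

lemma monom_degree_add: "monom_degree (a + b) = monom_degree a + monom_degree b"
proof -
  let ?F = "Poly_Mapping.keys a \<union> Poly_Mapping.keys b"
  have "monom_degree (a + b) = (\<Sum>S\<in>?F. Poly_Mapping.lookup a S) + (\<Sum>S\<in>?F. Poly_Mapping.lookup b S)"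
    using keys_add[of a b] by (simp add: monom_degree_eq_sum[of ?F] lookup_add sum.distrib)
  then show ?thesis
    by (simp add: monom_degree_eq_sum[of ?F a] monom_degree_eq_sum[of ?F b])
qed

lemma monom_degree_single [simp]: "monom_degree (Poly_Mapping.single S c) = c"
  unfolding monom_degree_def by simp

lemma monom_degree_sum_single_one:
  "finite L \<Longrightarrow> monom_degree (\<Sum>l\<in>L. Poly_Mapping.single (Z l) (1::nat)) = card L"
  by (induction L rule: finite_induct) (simp_all add: monom_degree_add, simp add: monom_degree_def)

lemma monom_eq_sum_single_one:
  "monom_degree m = k \<Longrightarrow> \<exists>S. m = (\<Sum>l\<in>{1..k}. Poly_Mapping.single (S l) 1)"
proof (induction k arbitrary: m)
  case 0
  then have "m = 0"
    unfolding monom_degree_def by (simp add: in_keys_iff poly_mapping_eqI)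
  then show ?case
    by simp
next
  case (Suc k)
  then obtain T where T: "T \<in> Poly_Mapping.keys m"
    unfolding monom_degree_def by fastforce
  define m' where "m' = m - Poly_Mapping.single T 1"
  have m: "m = m' + Poly_Mapping.single T 1"
    using T unfolding m'_def
    by (intro poly_mapping_eqI) (auto simp: lookup_add lookup_minus lookup_single when_def in_keys_iff)
  then have "monom_degree m' = k"
    using Suc.prems by (simp add: monom_degree_add)
  then obtain S where S: "m' = (\<Sum>l\<in>{1..k}. Poly_Mapping.single (S l) 1)"
    using Suc.IH by blast
  have "(\<Sum>l\<in>{1..k}. Poly_Mapping.single ((S(Suc k := T)) l) (1::nat)) = m'"
    unfolding S by (rule sum.cong) auto
  then have "m = (\<Sum>l\<in>{1..Suc k}. Poly_Mapping.single ((S(Suc k := T)) l) 1)"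
    unfolding m by simp
  then show ?case
    by blast
qed

lemma ideal_gen_mem: "b \<in> B \<Longrightarrow> c \<in> R \<Longrightarrow> c * b \<in> ideal_gen R B"
  unfolding ideal_gen_def by (intro CollectI exI[of _ "{b}"] exI[of _ "\<lambda>_. c"]) auto

lemma ideal_gen_zero: "0 \<in> ideal_gen R B"
  unfolding ideal_gen_def by (intro CollectI exI[of _ "{}"]) auto

lemma ideal_gen_add:
  assumes R: "0 \<in> R" "\<And>x y. x \<in> R \<Longrightarrow> y \<in> R \<Longrightarrow> x + y \<in> R"
    and "p \<in> ideal_gen R B" "q \<in> ideal_gen R B"
  shows "p + q \<in> ideal_gen R B"
proof -
  obtain A1 c1 where A1: "finite A1" "A1 \<subseteq> B" "\<forall>b\<in>A1. c1 b \<in> R" "p = (\<Sum>b\<in>A1. c1 b * b)"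
    using assms(3) unfolding ideal_gen_def by blast
  obtain A2 c2 where A2: "finite A2" "A2 \<subseteq> B" "\<forall>b\<in>A2. c2 b \<in> R" "q = (\<Sum>b\<in>A2. c2 b * b)"
    using assms(4) unfolding ideal_gen_def by blast
  define c1' where "c1' b = (if b \<in> A1 then c1 b else 0)" for b
  define c2' where "c2' b = (if b \<in> A2 then c2 b else 0)" for b
  have p: "p = (\<Sum>b\<in>A1 \<union> A2. c1' b * b)"
    unfolding A1(4) c1'_def by (rule sum.mono_neutral_cong_left) (use A1(1) A2(1) in auto)
  have q: "q = (\<Sum>b\<in>A1 \<union> A2. c2' b * b)"
    unfolding A2(4) c2'_def by (rule sum.mono_neutral_cong_left) (use A1(1) A2(1) in auto)
  have "p + q = (\<Sum>b\<in>A1 \<union> A2. (c1' b + c2' b) * b)"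
    unfolding p q by (simp add: sum.distrib distrib_right)
  moreover have "\<forall>b\<in>A1 \<union> A2. c1' b + c2' b \<in> R"
    using A1(3) A2(3) R unfolding c1'_def c2'_def by simp
  ultimately show ?thesis
    using A1(1,2) A2(1,2) unfolding ideal_gen_def
    by (intro CollectI exI[of _ "A1 \<union> A2"] exI[of _ "\<lambda>b. c1' b + c2' b"]) simp
qed

lemma ideal_gen_uminus:
  assumes "\<And>x. x \<in> R \<Longrightarrow> - x \<in> R" and "p \<in> ideal_gen R B"
  shows "- p \<in> ideal_gen R B"
proof -
  obtain A c where A: "finite A" "A \<subseteq> B" "\<forall>b\<in>A. c b \<in> R" "p = (\<Sum>b\<in>A. c b * b)"
    using assms(2) unfolding ideal_gen_def by blast
  then have "- p = (\<Sum>b\<in>A. (- c b) * b)" "\<forall>b\<in>A. - c b \<in> R"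
    using assms(1) by (simp_all add: sum_negf)
  with A(1,2) show ?thesis
    unfolding ideal_gen_def by (intro CollectI exI[of _ A] exI[of _ "\<lambda>b. - c b"]) simp
qed

lemma monomials_RG_add:
  "a \<in> monomials_RG d E \<Longrightarrow> b \<in> monomials_RG d E \<Longrightarrow> a + b \<in> monomials_RG d E"
  unfolding monomials_RG_def using keys_add[of a b] by blast

lemma zero_in_monomials_RG: "0 \<in> monomials_RG d E"
  unfolding monomials_RG_def by simp

lemma mon_in_RG: "m \<in> monomials_RG d E \<Longrightarrow> mon m \<in> RG d E"
  unfolding RG_def mon_def by simp

lemma mon_add: "(mon (a + b) :: 'k::field mpoly) = mon a * mon b"
  unfolding mon_def by (simp add: mult_single)

lemma one_in_RG: "1 \<in> RG d E"
  using mon_in_RG[OF zero_in_monomials_RG] by (simp add: mon_def)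

lemma RG_add: "x \<in> RG d E \<Longrightarrow> y \<in> RG d E \<Longrightarrow> x + y \<in> RG d E"
  unfolding RG_def using keys_add[of x y] by blast

lemma RG_diff: "x \<in> RG d E \<Longrightarrow> y \<in> RG d E \<Longrightarrow> x - y \<in> RG d E"
  unfolding RG_def using keys_diff[of x y] by blast

lemma RG_mult: "x \<in> RG d E \<Longrightarrow> y \<in> RG d E \<Longrightarrow> x * y \<in> RG d E"
  unfolding RG_def using keys_mult[of x y] monomials_RG_add by blast

lemma ideal_gen_RG_add:
  "p \<in> ideal_gen (RG d E) B \<Longrightarrow> q \<in> ideal_gen (RG d E) B \<Longrightarrow> p + q \<in> ideal_gen (RG d E) B"
  by (rule ideal_gen_add[OF _ RG_add]) (simp_all add: RG_def)

lemma ideal_gen_RG_diff: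
  "p \<in> ideal_gen (RG d E) B \<Longrightarrow> q \<in> ideal_gen (RG d E) B \<Longrightarrow> p - q \<in> ideal_gen (RG d E) B"
  using ideal_gen_RG_add[of p d E B "- q"] ideal_gen_uminus[of "RG d E" q B]
  by (simp add: RG_def)

lemma ideal_gen_RG_subset:
  assumes "B \<subseteq> RG d E"
  shows "ideal_gen (RG d E) B \<subseteq> RG d E"
proof
  fix p assume "p \<in> ideal_gen (RG d E) B"
  then obtain A c where A: "finite A" "A \<subseteq> B" "\<forall>b\<in>A. c b \<in> RG d E" "p = (\<Sum>b\<in>A. c b * b)"
    unfolding ideal_gen_def by blast
  have "c b * b \<in> RG d E" if "b \<in> A" for b
    using RG_mult A(2,3) assms that by blast
  then show "p \<in> RG d E"
    unfolding A(4) RG_def using keys_sum[of "\<lambda>b. c b * b" A] by blast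
qed

section \<open>Monomial orders and initial ideals\<close>

lemma finite_strict_total_has_greatest:
  assumes trans:
      "\<And>a b c. a \<in> A \<Longrightarrow> b \<in> A \<Longrightarrow> c \<in> A \<Longrightarrow> r a b \<Longrightarrow> r b c \<Longrightarrow> r a c"
    and total: "\<And>a b. a \<in> A \<Longrightarrow> b \<in> A \<Longrightarrow> a \<noteq> b \<Longrightarrow> r a b \<or> r b a"
    and "finite F" "F \<noteq> {}" "F \<subseteq> A"
  shows "\<exists>m\<in>F. \<forall>m'\<in>F. m' \<noteq> m \<longrightarrow> r m' m"
  using assms(3-5)
proof (induction F rule: finite_ne_induct)
  case (singleton x)
  then show ?case by simp
next
  case (insert x F)
  then obtain m where m: "m \<in> F" "\<forall>m'\<in>F. m' \<noteq> m \<longrightarrow> r m' m"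
    by auto
  have "x \<noteq> m" "x \<in> A" "m \<in> A"
    using insert m(1) by auto
  then consider "r m x" | "r x m"
    using total[of x m] by blast
  then show ?case
  proof cases
    case 1
    have "r m' x" if "m' \<in> F" for m'
    proof (cases "m' = m")
      case False
      then show ?thesis
        using 1 m that trans[of m' m x] \<open>x \<in> A\<close> \<open>m \<in> A\<close> insert.prems by blast
    qed (use 1 in simp)
    then show ?thesis
      by blast
  next
    case 2
    then show ?thesis
      using m by blast
  qed
qed

context
  fixes Mon and lt :: "monom \<Rightarrow> monom \<Rightarrow> bool"
  assumes mo: "monomial_order Mon lt"
begin

lemma monomial_order_irrefl: "a \<in> Mon \<Longrightarrow> \<not> lt a a"
  and monomial_order_trans:
    "a \<in> Mon \<Longrightarrow> b \<in> Mon \<Longrightarrow> c \<in> Mon \<Longrightarrow> lt a b \<Longrightarrow> lt b c \<Longrightarrow> lt a c"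
  and monomial_order_total: "a \<in> Mon \<Longrightarrow> b \<in> Mon \<Longrightarrow> a \<noteq> b \<Longrightarrow> lt a b \<or> lt b a"
  and monomial_order_add:
    "a \<in> Mon \<Longrightarrow> b \<in> Mon \<Longrightarrow> c \<in> Mon \<Longrightarrow> lt a b \<Longrightarrow> lt (a + c) (b + c)"
  using mo unfolding monomial_order_def by blast+

lemma monomial_order_asym: "a \<in> Mon \<Longrightarrow> b \<in> Mon \<Longrightarrow> lt a b \<Longrightarrow> \<not> lt b a"
  using monomial_order_irrefl monomial_order_trans by blast

lemma monomial_order_has_greatest:
  "finite F \<Longrightarrow> F \<noteq> {} \<Longrightarrow> F \<subseteq> Mon \<Longrightarrow> \<exists>m\<in>F. \<forall>m'\<in>F. m' \<noteq> m \<longrightarrow> lt m' m"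
  by (rule finite_strict_total_has_greatest[OF monomial_order_trans monomial_order_total])

lemma monomial_order_has_least:
  "finite F \<Longrightarrow> F \<noteq> {} \<Longrightarrow> F \<subseteq> Mon \<Longrightarrow> \<exists>m\<in>F. \<forall>m'\<in>F. m' \<noteq> m \<longrightarrow> lt m m'"
  by (rule finite_strict_total_has_greatest[of Mon "\<lambda>a b. lt b a"])
    (metis monomial_order_trans, metis monomial_order_total)

lemma lead_monom_eqI:
  assumes "Poly_Mapping.keys p \<subseteq> Mon" "M \<in> Poly_Mapping.keys p"
    and "\<forall>m'\<in>Poly_Mapping.keys p. m' \<noteq> M \<longrightarrow> lt m' M"
  shows "lead_monom lt p = M"
  unfolding lead_monom_def
proof (rule the_equality)
  fix m assume m: "m \<in> Poly_Mapping.keys p \<and> (\<forall>m'\<in>Poly_Mapping.keys p. m' \<noteq> m \<longrightarrow> lt m' m)"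
  show "m = M"
  proof (rule ccontr)
    assume "m \<noteq> M"
    then have "lt m M" "lt M m"
      using assms m by auto
    then show False
      using monomial_order_asym assms m by blast
  qed
qed (use assms in blast)

lemma lead_monom_greatest:
  assumes "Poly_Mapping.keys p \<subseteq> Mon" "p \<noteq> 0"
  shows "lead_monom lt p \<in> Poly_Mapping.keys p"
    and "\<And>m'. m' \<in> Poly_Mapping.keys p \<Longrightarrow> m' \<noteq> lead_monom lt p \<Longrightarrow> lt m' (lead_monom lt p)"
proof -
  obtain M where "M \<in> Poly_Mapping.keys p" "\<forall>m'\<in>Poly_Mapping.keys p. m' \<noteq> M \<longrightarrow> lt m' M"
    using monomial_order_has_greatest[of "Poly_Mapping.keys p"] assms by auto
  with lead_monom_eqI[OF assms(1)] show "lead_monom lt p \<in> Poly_Mapping.keys p"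
    and "\<And>m'. m' \<in> Poly_Mapping.keys p \<Longrightarrow> m' \<noteq> lead_monom lt p \<Longrightarrow> lt m' (lead_monom lt p)"
    by auto
qed

lemma lead_monom_mon_diff:
  assumes "a \<in> Mon" "b \<in> Mon" "lt b a"
  shows "lead_monom lt (mon a - mon b :: 'k::field mpoly) = a"
proof -
  have "a \<noteq> b"
    using assms monomial_order_irrefl by blast
  then have keys: "Poly_Mapping.keys (mon a - mon b :: 'k mpoly) = {a, b}"
    unfolding mon_def by (auto simp: in_keys_iff lookup_minus lookup_single when_def split: if_splits)
  show ?thesis
    by (rule lead_monom_eqI) (use keys assms \<open>a \<noteq> b\<close> in auto)
qed

end

lemma lead_monom_mon: "lead_monom lt (mon m :: 'k::field mpoly) = m"
  unfolding lead_monom_def mon_def by (rule the_equality) auto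

lemma mon_add_lead_monom_in_initial_ideal:
  assumes "w \<in> monomials_RG d E" "p \<in> I" "p \<noteq> 0"
  shows "(mon (w + lead_monom lt p) :: 'k::field mpoly) \<in> initial_ideal d E lt I"
  unfolding initial_ideal_def mon_add using assms
  by (intro ideal_gen_mem mon_in_RG) auto

lemma mon_in_initial_idealE:
  assumes "(mon m :: 'k::field mpoly) \<in> initial_ideal d E lt I"
  obtains u p where "u \<in> monomials_RG d E" "p \<in> I" "p \<noteq> 0" "m = u + lead_monom lt p"
proof -
  obtain A c where A: "A \<subseteq> {mon (lead_monom lt p) | p. p \<in> I \<and> p \<noteq> 0}"
    "\<forall>b\<in>A. c b \<in> RG d E" "(mon m :: 'k mpoly) = (\<Sum>b\<in>A. c b * b)"
    using assms unfolding initial_ideal_def ideal_gen_def by blast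
  have "m \<in> Poly_Mapping.keys (\<Sum>b\<in>A. c b * b)"
    unfolding A(3)[symmetric] by (simp add: mon_def)
  then obtain b where b: "b \<in> A" "m \<in> Poly_Mapping.keys (c b * b)"
    using keys_sum[of "\<lambda>b. c b * b" A] by blast
  obtain p where p: "b = mon (lead_monom lt p)" "p \<in> I" "p \<noteq> 0"
    using A(1) b(1) by blast
  obtain u where "u \<in> Poly_Mapping.keys (c b)" "m = u + lead_monom lt p"
    using b(2) keys_mult[of "c b" b] unfolding p(1) mon_def by auto
  moreover have "u \<in> monomials_RG d E"
    using A(2) b(1) calculation(1) unfolding RG_def by blast
  ultimately show thesis
    using that p(2,3) by blast
qed

section \<open>Colour classes and Kempe switchings\<close>

definition color_class :: "nat set \<Rightarrow> (nat \<Rightarrow> nat) \<Rightarrow> nat \<Rightarrow> nat set" where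
  "color_class W f l = {v\<in>W. f v = l}"

lemma xcol_eq_sum_color_class:
  "xcol W k f = (\<Sum>l\<in>{1..k}. Poly_Mapping.single (color_class W f l) 1)"
  unfolding xcol_def color_class_def ..

lemma xcol_two:
  "xcol W 2 a = Poly_Mapping.single (color_class W a 1) 1 + Poly_Mapping.single (color_class W a 2) 1"
proof -
  have "{1..2::nat} = {1, 2}"
    by auto
  then show ?thesis
    unfolding xcol_eq_sum_color_class by simp
qed

lemma xcol_two_cong:
  assumes "\<forall>v\<in>W. (a v = 1 \<longleftrightarrow> a' v = 1) \<and> (a v = 2 \<longleftrightarrow> a' v = 2)"
  shows "xcol W 2 a = xcol W 2 a'"
proof -
  have "color_class W a 1 = color_class W a' 1" "color_class W a 2 = color_class W a' 2"
    using assms unfolding color_class_def by auto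
  then show ?thesis
    unfolding xcol_two by simp
qed

lemma monom_degree_xcol: "monom_degree (xcol W k f) = k"
  using monom_degree_sum_single_one[of "{1..k}" "color_class W f"]
  unfolding xcol_eq_sum_color_class by simp

lemma color_class_stable:
  assumes "simple_graph d E" "W \<subseteq> {1..d}" "is_coloring E W k f"
  shows "color_class W f l \<in> stable_sets d E"
  unfolding stable_sets_def
proof (intro CollectI conjI ballI notI)
  show "color_class W f l \<subseteq> {1..d}"
    using assms(2) unfolding color_class_def by auto
next
  fix e assume "e \<in> E" "e \<subseteq> color_class W f l"
  moreover obtain x y where "e = {x, y}"
    using assms(1) \<open>e \<in> E\<close> unfolding simple_graph_def by blast
  ultimately have "{x, y} \<in> E" "x \<in> W" "y \<in> W" "f x = f y"
    unfolding color_class_def by auto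
  then show False
    using assms(3) unfolding is_coloring_def by blast
qed

lemma xcol_in_monomials_RG:
  assumes "simple_graph d E" "W \<subseteq> {1..d}" "is_coloring E W k f"
  shows "xcol W k f \<in> monomials_RG d E"
  unfolding monomials_RG_def xcol_eq_sum_color_class
  using keys_sum_single_one[of "color_class W f" "{1..k}"] color_class_stable[OF assms] by blast

lemma xcol_permute:
  assumes "\<sigma> permutes {1..k}" "\<forall>v\<in>W. h v = \<sigma> (g v)"
  shows "xcol W k h = xcol W k g"
proof -
  have "color_class W h (\<sigma> l) = color_class W g l" for l
    using assms(2) permutes_inj[OF assms(1)] unfolding color_class_def by (auto simp: inj_eq)
  then have "(\<Sum>l\<in>{1..k}. Poly_Mapping.single (color_class W h l) (1::nat)) =
      (\<Sum>l\<in>{1..k}. Poly_Mapping.single (color_class W g l) 1)"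
    using sum.reindex_bij_betw[OF permutes_imp_bij[OF assms(1)],
        of "\<lambda>l. Poly_Mapping.single (color_class W h l) (1::nat)"] by simp
  then show ?thesis
    unfolding xcol_eq_sum_color_class .
qed

lemma xcol_recolor_two_colors:
  assumes ij: "i \<in> {1..k}" "j \<in> {1..k}" "i \<noteq> j"
    and W: "W = {v\<in>V. f v = i \<or> f v = j}"
    and outside: "\<And>v. v \<in> V - W \<Longrightarrow> h v = f v"
    and inside: "\<And>v. v \<in> W \<Longrightarrow> h v = i \<or> h v = j"
  shows "xcol V k h = (\<Sum>l\<in>{1..k} - {i, j}. Poly_Mapping.single (color_class V f l) 1)
      + xcol W 2 (\<lambda>v. if h v = i then 1 else 2)"
proof -
  have other: "color_class V h l = color_class V f l" if "l \<in> {1..k} - {i, j}" for l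
  proof -
    have "h v = l \<longleftrightarrow> f v = l" if "v \<in> V" for v
      by (cases "v \<in> W") (use \<open>l \<in> {1..k} - {i, j}\<close> W outside inside that in auto)
    then show ?thesis
      unfolding color_class_def by auto
  qed
  have in_W: "v \<in> W" if "v \<in> V" "h v = i \<or> h v = j" for v
    using that W outside by (cases "v \<in> W") auto
  have classes: "color_class V h i = color_class W (\<lambda>v. if h v = i then 1 else 2) 1"
    "color_class V h j = color_class W (\<lambda>v. if h v = i then 1 else 2) 2"
    using ij(3) W inside in_W unfolding color_class_def by fastforce+
  have "xcol V k h = (\<Sum>l\<in>{1..k} - {i, j}. Poly_Mapping.single (color_class V h l) 1)
      + Poly_Mapping.single (color_class V h i) 1 + Poly_Mapping.single (color_class V h j) 1"
    unfolding xcol_eq_sum_color_class by (rule sum_remove_two[OF _ ij]) simp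
  also have "(\<Sum>l\<in>{1..k} - {i, j}. Poly_Mapping.single (color_class V h l) (1::nat)) =
      (\<Sum>l\<in>{1..k} - {i, j}. Poly_Mapping.single (color_class V f l) 1)"
    by (rule sum.cong) (simp_all add: other)
  finally show ?thesis
    unfolding xcol_two classes[symmetric] by (simp only: add.assoc)
qed

lemma two_coloring_of_two_colors:
  assumes "is_coloring E V k h" "W \<subseteq> V" "\<forall>v\<in>W. h v = i \<or> h v = j"
  shows "is_coloring E W 2 (\<lambda>v. if h v = i then 1 else 2)"
  unfolding is_coloring_def
proof (intro conjI ballI impI)
  fix x y assume xy: "x \<in> W" "y \<in> W" "{x, y} \<in> E"
  then have "h x \<noteq> h y"
    using assms(1,2) unfolding is_coloring_def by blast
  with xy show "(if h x = i then 1 else 2) \<noteq> (if h y = i then 1 else (2::nat))"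
    using assms(3) by auto
qed simp

lemma recolor_two_colors_is_coloring:
  assumes f: "is_coloring E {1..d} k f" and ij: "i \<in> {1..k}" "j \<in> {1..k}"
    and W: "W = {v\<in>{1..d}. f v = i \<or> f v = j}"
    and outside: "\<And>v. v \<in> {1..d} - W \<Longrightarrow> h v = f v"
    and inside: "\<And>v. v \<in> W \<Longrightarrow> h v = i \<or> h v = j"
    and proper: "\<And>x y. x \<in> W \<Longrightarrow> y \<in> W \<Longrightarrow> {x, y} \<in> E \<Longrightarrow> h x \<noteq> h y"
  shows "is_coloring E {1..d} k h"
proof -
  have mixed: "h x \<noteq> h y" if "x \<in> W" "y \<in> {1..d} - W" for x y
  proof -
    have "h y = f y" "f y \<noteq> i" "f y \<noteq> j"
      using that W outside by auto
    with inside[OF that(1)] show ?thesis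
      by auto
  qed
  have "h x \<noteq> h y" if xy: "x \<in> {1..d}" "y \<in> {1..d}" "{x, y} \<in> E" for x y
  proof (cases "x \<in> W"; cases "y \<in> W")
    assume "x \<notin> W" "y \<notin> W"
    then show ?thesis
      using xy f outside unfolding is_coloring_def by simp
  next
    assume "x \<notin> W" "y \<in> W"
    then show ?thesis
      using mixed[of y x] xy by simp
  qed (use xy proper mixed in simp_all)
  moreover have "h v \<in> {1..k}" if "v \<in> {1..d}" for v
    using that f ij outside inside unfolding is_coloring_def by (cases "v \<in> W") auto
  ultimately show ?thesis
    unfolding is_coloring_def by blast
qed

lemma adj_in_rtranclp_mem: "(adj_in E X)\<^sup>*\<^sup>* u v \<Longrightarrow> u \<in> X \<Longrightarrow> v \<in> X"
  by (induction rule: rtranclp_induct) (auto simp: adj_in_def)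

lemma adj_in_rtranclp_sym: "(adj_in E X)\<^sup>*\<^sup>* u v \<Longrightarrow> (adj_in E X)\<^sup>*\<^sup>* v u"
proof (induction rule: rtranclp_induct)
  case (step y z)
  then have "adj_in E X z y"
    unfolding adj_in_def by (simp add: insert_commute)
  from this step.IH show ?case
    by (rule converse_rtranclp_into_rtranclp)
qed simp

lemma component_subset: "is_component E X C \<Longrightarrow> C \<subseteq> X"
  unfolding is_component_def using adj_in_rtranclp_mem by blast

lemma component_closed:
  assumes "is_component E X C" "v \<in> C" "adj_in E X v w"
  shows "w \<in> C"
proof -
  obtain u where "C = {v. (adj_in E X)\<^sup>*\<^sup>* u v}"
    using assms(1) unfolding is_component_def by blast
  with assms(2,3) show ?thesis
    using rtranclp.rtrancl_into_rtrancl[of "adj_in E X" u v w] by blast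
qed

lemma component_eq:
  assumes "is_component E X C1" "is_component E X C2" "x \<in> C1" "x \<in> C2"
  shows "C1 = C2"
proof -
  obtain u1 u2 where u: "C1 = {v. (adj_in E X)\<^sup>*\<^sup>* u1 v}" "C2 = {v. (adj_in E X)\<^sup>*\<^sup>* u2 v}"
    using assms(1,2) unfolding is_component_def by blast
  then have "(adj_in E X)\<^sup>*\<^sup>* u1 x" "(adj_in E X)\<^sup>*\<^sup>* u2 x"
    using assms(3,4) by auto
  then have "(adj_in E X)\<^sup>*\<^sup>* u1 u2" "(adj_in E X)\<^sup>*\<^sup>* u2 u1"
    by (meson rtranclp_trans adj_in_rtranclp_sym)+
  then show ?thesis
    unfolding u by (auto intro: rtranclp_trans[of _ u1 u2] rtranclp_trans[of _ u2 u1])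
qed

lemma swap_colors_eq_transpose: "swap_colors = transpose"
  by (simp add: fun_eq_iff swap_colors_def transpose_def)

lemma kempe_switch_is_coloring:
  assumes f: "is_coloring E {1..d} k f" and ij: "i \<in> {1..k}" "j \<in> {1..k}"
    and C: "is_component E {v\<in>{1..d}. f v = i \<or> f v = j} C"
  shows "is_coloring E {1..d} k (\<lambda>v. if v \<in> C then transpose i j (f v) else f v)"
proof (rule recolor_two_colors_is_coloring[OF f ij refl])
  let ?W = "{v\<in>{1..d}. f v = i \<or> f v = j}"
  let ?g = "\<lambda>v. if v \<in> C then transpose i j (f v) else f v"
  have CW: "C \<subseteq> ?W"
    by (rule component_subset[OF C])
  show "?g v = f v" if "v \<in> {1..d} - ?W" for v
    using that CW by auto
  show "?g v = i \<or> ?g v = j" if "v \<in> ?W" for v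
    using that by (auto simp: transpose_def)
  fix x y assume xy: "x \<in> ?W" "y \<in> ?W" "{x, y} \<in> E"
  then have "x \<in> C \<longleftrightarrow> y \<in> C"
    using component_closed[OF C, of x y] component_closed[OF C, of y x]
    unfolding adj_in_def by (auto simp: insert_commute)
  moreover have "f x \<noteq> f y"
    using f xy unfolding is_coloring_def by auto
  ultimately show "?g x \<noteq> ?g y"
    by (auto dest: transpose_eq_imp_eq)
qed

lemma kempe_stepI:
  assumes "i \<in> {1..k}" "j \<in> {1..k}" "i \<noteq> j"
    and "is_component E {v\<in>{1..d}. f v = i \<or> f v = j} C"
  shows "kempe_step d E k f (\<lambda>v. if v \<in> C then transpose i j (f v) else f v)"
proof (cases "i < j")
  case True
  with assms show ?thesis
    unfolding kempe_step_def swap_colors_eq_transpose by (intro exI[of _ i] exI[of _ j] exI[of _ C]) simp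
next
  case False
  have "{v\<in>{1..d}. f v = j \<or> f v = i} = {v\<in>{1..d}. f v = i \<or> f v = j}"
    by auto
  with False assms show ?thesis
    unfolding kempe_step_def swap_colors_eq_transpose transpose_commute[of i j]
    by (intro exI[of _ j] exI[of _ i] exI[of _ C]) simp
qed

lemma kempe_stepE:
  assumes "kempe_step d E k f g"
  obtains i j C where "i \<in> {1..k}" "j \<in> {1..k}" "i \<noteq> j"
    "is_component E {v\<in>{1..d}. f v = i \<or> f v = j} C"
    "g = (\<lambda>v. if v \<in> C then transpose i j (f v) else f v)"
proof -
  obtain i j C where "1 \<le> i" "i < j" "j \<le> k" "is_component E {v\<in>{1..d}. f v = i \<or> f v = j} C"
    "g = (\<lambda>v. if v \<in> C then transpose i j (f v) else f v)"
    using assms unfolding kempe_step_def swap_colors_eq_transpose by blast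
  then show thesis
    by (intro that[of i j C]) auto
qed

lemma kempe_steps_switch_components:
  assumes ij: "i \<in> {1..k}" "j \<in> {1..k}" "i \<noteq> j" and "finite D"
    and "\<forall>C\<in>D. is_component E {v\<in>{1..d}. f v = i \<or> f v = j} C"
  shows "(kempe_step d E k)\<^sup>*\<^sup>* f (\<lambda>v. if v \<in> \<Union>D then transpose i j (f v) else f v)"
  using assms(4,5)
proof (induction D rule: finite_induct)
  case (insert C D)
  let ?W = "{v\<in>{1..d}. f v = i \<or> f v = j}"
  let ?h = "\<lambda>v. if v \<in> \<Union>D then transpose i j (f v) else f v"
  have C: "is_component E ?W C"
    using insert.prems by simp
  have "C \<inter> \<Union>D = {}"
    using component_eq[OF C] insert.hyps(2) insert.prems by blast
  then have "(\<lambda>v. if v \<in> \<Union>(insert C D) then transpose i j (f v) else f v) =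
      (\<lambda>v. if v \<in> C then transpose i j (?h v) else ?h v)"
    by (auto simp: fun_eq_iff)
  moreover have "{v\<in>{1..d}. ?h v = i \<or> ?h v = j} = ?W"
    by (auto simp: transpose_def)
  with C have "kempe_step d E k ?h (\<lambda>v. if v \<in> C then transpose i j (?h v) else ?h v)"
    by (intro kempe_stepI[OF ij]) simp
  ultimately have "kempe_step d E k ?h (\<lambda>v. if v \<in> \<Union>(insert C D) then transpose i j (f v) else f v)"
    by simp
  with insert show ?case
    by (simp add: rtranclp.rtrancl_into_rtrancl)
qed simp

lemma kempe_steps_recolor_two_colors:
  assumes f: "is_coloring E {1..d} k f" and h: "is_coloring E {1..d} k h"
    and ij: "i \<in> {1..k}" "j \<in> {1..k}" "i \<noteq> j"
    and W: "W = {v\<in>{1..d}. f v = i \<or> f v = j}"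
    and outside: "\<And>v. v \<notin> W \<Longrightarrow> h v = f v"
    and inside: "\<And>v. v \<in> W \<Longrightarrow> h v = i \<or> h v = j"
  shows "(kempe_step d E k)\<^sup>*\<^sup>* f h"
proof -
  have "W \<subseteq> {1..d}"
    using W by blast
  define D where "D = {C. is_component E W C \<and> (\<exists>v\<in>C. f v \<noteq> h v)}"
  have "D \<subseteq> Pow {1..d}"
    using component_subset \<open>W \<subseteq> {1..d}\<close> unfolding D_def by blast
  then have "finite D"
    by (rule finite_subset) simp
  moreover have "\<forall>C\<in>D. is_component E {v\<in>{1..d}. f v = i \<or> f v = j} C"
    using W unfolding D_def by blast
  ultimately have steps: "(kempe_step d E k)\<^sup>*\<^sup>* f (\<lambda>v. if v \<in> \<Union>D then transpose i j (f v) else f v)"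
    by (rule kempe_steps_switch_components[OF ij])
  \<comment> \<open>on each component of G[W], f and h are proper 2-colourings, so they agree everywhere or nowhere\<close>
  have agree: "f x = h x \<longleftrightarrow> f y = h y" if "(adj_in E W)\<^sup>*\<^sup>* x y" for x y
    using that
  proof (induction rule: rtranclp_induct)
    case (step y z)
    then have yz: "y \<in> W" "z \<in> W" "{y, z} \<in> E"
      unfolding adj_in_def by auto
    then have "f y \<noteq> f z" "h y \<noteq> h z"
      using f h \<open>W \<subseteq> {1..d}\<close> unfolding is_coloring_def by blast+
    moreover have "f y = i \<or> f y = j" "f z = i \<or> f z = j"
      using yz W by simp_all
    moreover have "h y = i \<or> h y = j" "h z = i \<or> h z = j"
      using yz inside by simp_all
    ultimately have "f y = h y \<longleftrightarrow> f z = h z"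
      by metis
    with step.IH show ?case
      by simp
  qed simp
  have switched: "v \<in> \<Union>D \<longleftrightarrow> f v \<noteq> h v" if "v \<in> W" for v
  proof
    assume "v \<in> \<Union>D"
    then obtain u w where "(adj_in E W)\<^sup>*\<^sup>* u v" "(adj_in E W)\<^sup>*\<^sup>* u w" "f w \<noteq> h w"
      unfolding D_def is_component_def by blast
    then show "f v \<noteq> h v"
      using agree[of u v] agree[of u w] by simp
  next
    assume "f v \<noteq> h v"
    then have "{w. (adj_in E W)\<^sup>*\<^sup>* v w} \<in> D"
      using that unfolding D_def is_component_def by blast
    then show "v \<in> \<Union>D"
      by blast
  qed
  have "(if v \<in> \<Union>D then transpose i j (f v) else f v) = h v" for v
  proof (cases "v \<in> W")
    case True
    then have "f v = i \<or> f v = j" "h v = i \<or> h v = j"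
      using W inside by auto
    with switched[OF True] show ?thesis
      by (auto simp: transpose_def)
  next
    case False
    then have "v \<notin> \<Union>D"
      using component_subset unfolding D_def by blast
    with False show ?thesis
      using outside by simp
  qed
  with steps show ?thesis
    by simp
qed

lemma kempe_equiv_refl: "kempe_equiv d E k g g"
  unfolding kempe_equiv_def by (intro exI[of _ id] exI[of _ g]) (simp add: permutes_id)

lemma kempe_equiv_steps_trans:
  "(kempe_step d E k)\<^sup>*\<^sup>* h f \<Longrightarrow> kempe_equiv d E k f g \<Longrightarrow> kempe_equiv d E k h g"
  unfolding kempe_equiv_def by (meson rtranclp_trans)

section \<open>Coefficient sums\<close>

definition coeff_sum :: "monom set \<Rightarrow> 'k::field mpoly \<Rightarrow> 'k" where
  "coeff_sum X p = (\<Sum>m\<in>X. Poly_Mapping.lookup p m)"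

lemma coeff_sum_sum: "coeff_sum X (\<Sum>i\<in>I. q i) = (\<Sum>i\<in>I. coeff_sum X (q i))"
  unfolding coeff_sum_def lookup_sum by (rule sum.swap)

lemma coeff_sum_single:
  "finite X \<Longrightarrow> coeff_sum X (Poly_Mapping.single m c) = (if m \<in> X then c else 0)"
  unfolding coeff_sum_def by (simp add: lookup_single when_def)

lemma coeff_sum_diff: "coeff_sum X (p - q) = coeff_sum X p - coeff_sum X q"
  unfolding coeff_sum_def by (simp add: lookup_minus sum_subtractf)

lemma coeff_sum_mult_eq_0I:
  assumes "\<And>u c. coeff_sum X (Poly_Mapping.single u c * b) = 0"
  shows "coeff_sum X (r * b) = 0"
proof -
  have "r * b = (\<Sum>u\<in>Poly_Mapping.keys r. Poly_Mapping.single u (Poly_Mapping.lookup r u)) * b"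
    by (simp only: poly_mapping_sum_single[symmetric])
  then show ?thesis
    using assms by (simp add: sum_distrib_right coeff_sum_sum)
qed

lemma coeff_sum_ideal_gen_eq_0:
  assumes "\<And>r b. b \<in> B \<Longrightarrow> coeff_sum X (r * b) = 0" and "p \<in> ideal_gen R B"
  shows "coeff_sum X (c * p) = 0"
proof -
  obtain A a where A: "A \<subseteq> B" "p = (\<Sum>b\<in>A. a b * b)"
    using assms(2) unfolding ideal_gen_def by blast
  then have "c * p = (\<Sum>b\<in>A. (c * a b) * b)"
    by (simp add: sum_distrib_left mult.assoc)
  with A(1) show ?thesis
    using assms(1) by (simp add: coeff_sum_sum subset_iff)
qed

lemma least_notin_initial_ideal_if_coeff_sum_vanishes:
  assumes mo: "monomial_order (monomials_RG d E) lt" and I: "I \<subseteq> RG d E"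
    and null: "\<And>c p. p \<in> I \<Longrightarrow> coeff_sum X (c * p) = 0"
    and X: "finite X" "X \<subseteq> monomials_RG d E" "m0 \<in> X" "\<forall>m\<in>X. m \<noteq> m0 \<longrightarrow> lt m0 m"
  shows "(mon m0 :: 'k::field mpoly) \<notin> initial_ideal d E lt I"
proof
  let ?Mon = "monomials_RG d E"
  assume "(mon m0 :: 'k mpoly) \<in> initial_ideal d E lt I"
  then obtain u and p :: "'k mpoly" where u: "u \<in> ?Mon" and p: "p \<in> I" "p \<noteq> 0"
    and m0: "m0 = u + lead_monom lt p"
    by (rule mon_in_initial_idealE)
  define L where "L = lead_monom lt p"
  define q where "q = Poly_Mapping.single u 1 * p"
  have keys_p: "Poly_Mapping.keys p \<subseteq> ?Mon"
    using I p(1) unfolding RG_def by blast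
  note L = lead_monom_greatest[OF mo keys_p p(2), folded L_def]
  have LM: "L \<in> ?Mon" "m0 \<in> ?Mon"
    using L(1) keys_p X(2,3) by auto
  have "Poly_Mapping.lookup q m = 0" if m: "m \<in> X - {m0}" for m
  proof (rule ccontr)
    assume "Poly_Mapping.lookup q m \<noteq> 0"
    then obtain y where y: "y \<in> Poly_Mapping.keys p" "m = u + y"
      using keys_single_one_mult[of u p] unfolding q_def in_keys_iff[symmetric] by blast
    then have "lt y L"
      using L(2) m m0 unfolding L_def by auto
    then have "lt (y + u) (L + u)"
      using monomial_order_add[OF mo _ LM(1) u] y(1) keys_p by blast
    then have "lt m m0"
      using y(2) m0 unfolding L_def by (simp add: add.commute)
    moreover have "lt m0 m" "m \<in> ?Mon"
      using X(2,4) m by auto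
    ultimately show False
      using monomial_order_asym[OF mo] LM(2) by blast
  qed
  then have "coeff_sum X q = Poly_Mapping.lookup q m0"
    unfolding coeff_sum_def by (simp add: sum.remove[OF X(1,3)])
  also have "\<dots> = Poly_Mapping.lookup p L"
    unfolding q_def m0 L_def by (rule lookup_single_one_mult)
  finally have "coeff_sum X q \<noteq> 0"
    using L(1) by (simp add: in_keys_iff)
  with null[OF p(1)] show False
    unfolding q_def by blast
qed

section \<open>Kempe classes and the Kempe ideal\<close>

lemma kempe_step_is_coloring:
  assumes "kempe_step d E k f g" "is_coloring E {1..d} k f"
  shows "is_coloring E {1..d} k g"
proof -
  obtain i j C where ij: "i \<in> {1..k}" "j \<in> {1..k}"
    and C: "is_component E {v\<in>{1..d}. f v = i \<or> f v = j} C"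
    and g: "g = (\<lambda>v. if v \<in> C then transpose i j (f v) else f v)"
    using assms(1) by (rule kempe_stepE)
  show ?thesis
    unfolding g by (rule kempe_switch_is_coloring[OF assms(2) ij C])
qed

lemma kempe_ideal_mult_mem:
  "b \<in> J_gens d E \<union> M_gens d E \<Longrightarrow> c \<in> RG d E \<Longrightarrow> c * b \<in> kempe_ideal d E"
  unfolding kempe_ideal_def by (rule ideal_gen_mem)

lemma kempe_step_diff_in_kempe_ideal:
  assumes sg: "simple_graph d E" and f: "is_coloring E {1..d} k f" and step: "kempe_step d E k f f'"
  shows "mon (xcol {1..d} k f) - mon (xcol {1..d} k f') \<in> (kempe_ideal d E :: 'k::field mpoly set)"
proof -
  obtain i j C where ij: "i \<in> {1..k}" "j \<in> {1..k}" "i \<noteq> j"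
    and C: "is_component E {v\<in>{1..d}. f v = i \<or> f v = j} C"
    and f': "f' = (\<lambda>v. if v \<in> C then transpose i j (f v) else f v)"
    using step by (rule kempe_stepE)
  define W where "W = {v\<in>{1..d}. f v = i \<or> f v = j}"
  define rest where
    "rest = (\<Sum>l\<in>{1..k} - {i, j}. Poly_Mapping.single (color_class {1..d} f l) (1::nat))"
  define a where "a = (\<lambda>v. if f v = i then 1 else (2::nat))"
  define b where "b = (\<lambda>v. if f' v = i then 1 else (2::nat))"
  have "C \<subseteq> W"
    using component_subset[OF C] unfolding W_def .
  then have outside: "\<And>v. v \<in> {1..d} - W \<Longrightarrow> f' v = f v"
    and inside: "\<And>v. v \<in> W \<Longrightarrow> f' v = i \<or> f' v = j"
    unfolding f' W_def by (auto simp: transpose_def)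
  have xcol_f: "xcol {1..d} k f = rest + xcol W 2 a"
    unfolding rest_def a_def by (rule xcol_recolor_two_colors[OF ij W_def]) (auto simp: W_def)
  have xcol_f': "xcol {1..d} k f' = rest + xcol W 2 b"
    unfolding rest_def b_def by (rule xcol_recolor_two_colors[OF ij W_def outside inside])
  have diff: "mon (xcol {1..d} k f) - mon (xcol {1..d} k f') =
      (mon rest :: 'k mpoly) * (mon (xcol W 2 a) - mon (xcol W 2 b))"
    unfolding xcol_f xcol_f' mon_add by (rule right_diff_distrib[symmetric])
  have gen: "(mon (xcol W 2 a) - mon (xcol W 2 b) :: 'k mpoly) \<in> J_gens d E"
  proof -
    have "W \<subseteq> {1..d}" "\<forall>v\<in>W. f v = i \<or> f v = j" "\<forall>v\<in>W. f' v = i \<or> f' v = j"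
      using inside unfolding W_def by auto
    then have "is_coloring E W 2 a" "is_coloring E W 2 b"
      unfolding a_def b_def
      using two_coloring_of_two_colors[OF f] two_coloring_of_two_colors[OF kempe_step_is_coloring[OF step f]]
      by blast+
    with \<open>W \<subseteq> {1..d}\<close> show ?thesis
      unfolding J_gens_def by blast
  qed
  have "rest \<in> monomials_RG d E"
    unfolding rest_def monomials_RG_def
    using keys_sum_single_one[of "color_class {1..d} f"] color_class_stable[OF sg _ f] by blast
  then have "(mon rest :: 'k mpoly) * (mon (xcol W 2 a) - mon (xcol W 2 b)) \<in> kempe_ideal d E"
    using kempe_ideal_mult_mem gen mon_in_RG by blast
  then show ?thesis
    by (simp only: diff)
qed

lemma kempe_steps_diff_in_kempe_ideal:
  assumes sg: "simple_graph d E" and steps: "(kempe_step d E k)\<^sup>*\<^sup>* f h"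
    and f: "is_coloring E {1..d} k f"
  shows "mon (xcol {1..d} k f) - mon (xcol {1..d} k h) \<in> (kempe_ideal d E :: 'k::field mpoly set)"
proof -
  have "is_coloring E {1..d} k h \<and>
      mon (xcol {1..d} k f) - mon (xcol {1..d} k h) \<in> (kempe_ideal d E :: 'k mpoly set)"
    using steps
  proof (induction rule: rtranclp_induct)
    case base
    show ?case
      using f ideal_gen_zero unfolding kempe_ideal_def by simp
  next
    case (step h h')
    then have h: "is_coloring E {1..d} k h"
      and IH: "mon (xcol {1..d} k f) - mon (xcol {1..d} k h) \<in> (kempe_ideal d E :: 'k mpoly set)"
      by auto
    have "mon (xcol {1..d} k h) - mon (xcol {1..d} k h') \<in> (kempe_ideal d E :: 'k mpoly set)"
      by (rule kempe_step_diff_in_kempe_ideal[OF sg h step.hyps(2)])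
    with IH have "(mon (xcol {1..d} k f) - mon (xcol {1..d} k h)) +
        (mon (xcol {1..d} k h) - mon (xcol {1..d} k h')) \<in> (kempe_ideal d E :: 'k mpoly set)"
      unfolding kempe_ideal_def by (rule ideal_gen_RG_add)
    then show ?case
      using kempe_step_is_coloring[OF step.hyps(2) h] by simp
  qed
  then show ?thesis ..
qed

definition kempe_class_monomials :: "nat \<Rightarrow> nat set set \<Rightarrow> nat \<Rightarrow> (nat \<Rightarrow> nat) \<Rightarrow> monom set" where
  "kempe_class_monomials d E k g =
     {xcol {1..d} k f | f. is_coloring E {1..d} k f \<and> kempe_equiv d E k f g}"

lemma finite_kempe_class_monomials: "finite (kempe_class_monomials d E k g)"
proof (rule finite_subset)
  show "kempe_class_monomials d E k g \<subseteq> (\<lambda>f. xcol {1..d} k f) ` ({1..d} \<rightarrow>\<^sub>E {1..k})"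
  proof
    fix m assume "m \<in> kempe_class_monomials d E k g"
    then obtain f where f: "is_coloring E {1..d} k f" "m = xcol {1..d} k f"
      unfolding kempe_class_monomials_def by blast
    have classes: "color_class {1..d} (restrict f {1..d}) l = color_class {1..d} f l" for l
      unfolding color_class_def by auto
    have "xcol {1..d} k (restrict f {1..d}) = xcol {1..d} k f"
      unfolding xcol_eq_sum_color_class classes ..
    moreover have "restrict f {1..d} \<in> {1..d} \<rightarrow>\<^sub>E {1..k}"
      using f(1) unfolding is_coloring_def by auto
    ultimately show "m \<in> (\<lambda>f. xcol {1..d} k f) ` ({1..d} \<rightarrow>\<^sub>E {1..k})"
      using f(2) by (metis image_eqI)
  qed
qed (simp add: finite_PiE)

lemma kempe_class_monomials_subset:
  "simple_graph d E \<Longrightarrow> kempe_class_monomials d E k g \<subseteq> monomials_RG d E"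
  unfolding kempe_class_monomials_def using xcol_in_monomials_RG by blast

lemma xcol_in_kempe_class_monomials:
  "is_coloring E {1..d} k g \<Longrightarrow> xcol {1..d} k g \<in> kempe_class_monomials d E k g"
  unfolding kempe_class_monomials_def using kempe_equiv_refl by blast

lemma kempe_class_monomial_congruent:
  assumes sg: "simple_graph d E" and m: "m \<in> kempe_class_monomials d E k g"
  shows "mon m - mon (xcol {1..d} k g) \<in> (kempe_ideal d E :: 'k::field mpoly set)"
proof -
  obtain f \<sigma> h where f: "is_coloring E {1..d} k f" "m = xcol {1..d} k f"
    and \<sigma>: "\<sigma> permutes {1..k}" and steps: "(kempe_step d E k)\<^sup>*\<^sup>* f h"
    and h: "\<forall>v\<in>{1..d}. h v = \<sigma> (g v)"
    using m unfolding kempe_class_monomials_def kempe_equiv_def by blast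
  then show ?thesis
    using kempe_steps_diff_in_kempe_ideal[OF sg steps f(1)] xcol_permute[OF \<sigma> h] by simp
qed

lemma kempe_class_monomials_no_overlap:
  assumes "S \<inter> T \<noteq> {}"
  shows "w + Poly_Mapping.single S 1 + Poly_Mapping.single T 1 \<notin> kempe_class_monomials d E k g"
proof
  assume "w + Poly_Mapping.single S 1 + Poly_Mapping.single T 1 \<in> kempe_class_monomials d E k g"
  then obtain f where "w + Poly_Mapping.single S 1 + Poly_Mapping.single T 1 = xcol {1..d} k f"
    unfolding kempe_class_monomials_def by blast
  then have "(\<Sum>l\<in>{1..k}. Poly_Mapping.single (color_class {1..d} f l) 1) =
      w + Poly_Mapping.single S 1 + Poly_Mapping.single T 1"
    by (simp only: xcol_eq_sum_color_class)
  then obtain l1 l2 where "l1 \<noteq> l2" "color_class {1..d} f l1 = S" "color_class {1..d} f l2 = T"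
    by (rule sum_single_one_eq_add_singlesE[OF finite_atLeastAtMost])
  moreover have "color_class {1..d} f l1 \<inter> color_class {1..d} f l2 = {}"
    using \<open>l1 \<noteq> l2\<close> unfolding color_class_def by auto
  ultimately show False
    using assms by simp
qed

lemma xcol_eq_add_two_coloringE:
  assumes a: "is_coloring E W 2 a" and W: "W \<subseteq> {1..d}"
    and f: "xcol {1..d} k f = u + xcol W 2 a"
  obtains i j where "i \<in> {1..k}" "j \<in> {1..k}" "i \<noteq> j" "W = {v\<in>{1..d}. f v = i \<or> f v = j}"
    "u = (\<Sum>l\<in>{1..k} - {i, j}. Poly_Mapping.single (color_class {1..d} f l) 1)"
proof -
  have "(\<Sum>l\<in>{1..k}. Poly_Mapping.single (color_class {1..d} f l) 1) =
      u + Poly_Mapping.single (color_class W a 1) 1 + Poly_Mapping.single (color_class W a 2) 1"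
    using f unfolding xcol_two by (simp only: xcol_eq_sum_color_class add.assoc)
  then obtain i j where ij: "i \<in> {1..k}" "j \<in> {1..k}" "i \<noteq> j"
    and ci: "color_class {1..d} f i = color_class W a 1"
    and cj: "color_class {1..d} f j = color_class W a 2"
    by (rule sum_single_one_eq_add_singlesE[OF finite_atLeastAtMost])
  have a12: "a v = 1 \<or> a v = 2" if "v \<in> W" for v
    using a that unfolding is_coloring_def by auto
  have fi: "f v = i \<longleftrightarrow> a v = 1" and fj: "f v = j \<longleftrightarrow> a v = 2" if "v \<in> W" for v
    using ci cj that W unfolding color_class_def set_eq_iff by blast+
  have W_eq: "W = {v\<in>{1..d}. f v = i \<or> f v = j}"
    using ci cj a12 W unfolding color_class_def set_eq_iff by blast
  have "xcol W 2 (\<lambda>v. if f v = i then 1 else 2) = xcol W 2 a"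
    using fi fj a12 ij(3) by (intro xcol_two_cong) auto
  moreover have "xcol {1..d} k f =
      (\<Sum>l\<in>{1..k} - {i, j}. Poly_Mapping.single (color_class {1..d} f l) 1)
      + xcol W 2 (\<lambda>v. if f v = i then 1 else 2)"
    by (rule xcol_recolor_two_colors[OF ij W_eq]) (use W_eq in auto)
  ultimately have "u = (\<Sum>l\<in>{1..k} - {i, j}. Poly_Mapping.single (color_class {1..d} f l) 1)"
    using f by simp
  with ij W_eq show thesis
    using that by blast
qed

lemma kempe_class_monomials_exchange:
  assumes W: "W \<subseteq> {1..d}" and a: "is_coloring E W 2 a" and b: "is_coloring E W 2 b"
    and m: "u + xcol W 2 a \<in> kempe_class_monomials d E k g"
  shows "u + xcol W 2 b \<in> kempe_class_monomials d E k g"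
proof -
  obtain f where f: "is_coloring E {1..d} k f" "xcol {1..d} k f = u + xcol W 2 a"
    and fg: "kempe_equiv d E k f g"
    using m unfolding kempe_class_monomials_def by force
  obtain i j where ij: "i \<in> {1..k}" "j \<in> {1..k}" "i \<noteq> j"
    and W_eq: "W = {v\<in>{1..d}. f v = i \<or> f v = j}"
    and u: "u = (\<Sum>l\<in>{1..k} - {i, j}. Poly_Mapping.single (color_class {1..d} f l) 1)"
    by (rule xcol_eq_add_two_coloringE[OF a W f(2)])
  define h where "h v = (if v \<in> W then if b v = 1 then i else j else f v)" for v
  have b12: "b v = 1 \<or> b v = 2" if "v \<in> W" for v
    using b that unfolding is_coloring_def by auto
  have h_outside: "h v = f v" if "v \<notin> W" for v
    using that unfolding h_def by simp
  have h_inside: "h v = i \<or> h v = j" if "v \<in> W" for v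
    using that unfolding h_def by simp
  have h: "is_coloring E {1..d} k h"
  proof (rule recolor_two_colors_is_coloring[OF f(1) ij(1,2) W_eq])
    fix x y assume xy: "x \<in> W" "y \<in> W" "{x, y} \<in> E"
    then have "b x \<noteq> b y"
      using b unfolding is_coloring_def by blast
    with xy show "h x \<noteq> h y"
      using b12[OF xy(1)] b12[OF xy(2)] ij(3) unfolding h_def by auto
  qed (use h_outside h_inside in auto)
  have "xcol W 2 (\<lambda>v. if h v = i then 1 else 2) = xcol W 2 b"
    using b12 ij(3) unfolding h_def by (intro xcol_two_cong) auto
  moreover have "xcol {1..d} k h = u + xcol W 2 (\<lambda>v. if h v = i then 1 else 2)"
    unfolding u by (rule xcol_recolor_two_colors[OF ij W_eq]) (use h_outside h_inside in auto)
  ultimately have xcol_h: "u + xcol W 2 b = xcol {1..d} k h"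
    by simp
  have "(kempe_step d E k)\<^sup>*\<^sup>* h f"
  proof (rule kempe_steps_recolor_two_colors[OF h f(1) ij])
    have "v \<in> W \<longleftrightarrow> v \<in> {1..d} \<and> (h v = i \<or> h v = j)" for v
      by (cases "v \<in> W") (use W_eq h_outside h_inside in auto)
    then show "W = {v\<in>{1..d}. h v = i \<or> h v = j}"
      by blast
  qed (use W_eq h_outside in auto)
  then have "kempe_equiv d E k h g"
    using fg by (rule kempe_equiv_steps_trans)
  with h show ?thesis
    unfolding kempe_class_monomials_def xcol_h by blast
qed

lemma coeff_sum_kempe_class_gen_eq_0:
  assumes "b \<in> J_gens d E \<union> M_gens d E"
  shows "coeff_sum (kempe_class_monomials d E k g) (r * b) = (0::'k::field)"
proof (rule coeff_sum_mult_eq_0I)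
  fix u and c :: 'k
  let ?X = "kempe_class_monomials d E k g"
  from assms consider (J) W a a' where "W \<subseteq> {1..d}" "is_coloring E W 2 a" "is_coloring E W 2 a'"
      "b = mon (xcol W 2 a) - mon (xcol W 2 a')"
    | (M) S T where "S \<inter> T \<noteq> {}" "b = mon (Poly_Mapping.single S 1 + Poly_Mapping.single T 1)"
    unfolding J_gens_def M_gens_def by blast
  then show "coeff_sum ?X (Poly_Mapping.single u c * b) = 0"
  proof cases
    case J
    have "u + xcol W 2 a \<in> ?X \<longleftrightarrow> u + xcol W 2 a' \<in> ?X"
      using kempe_class_monomials_exchange[OF J(1,2,3)] kempe_class_monomials_exchange[OF J(1,3,2)] by blast
    then show ?thesis
      unfolding J(4) mon_def
      by (simp add: right_diff_distrib mult_single coeff_sum_diff coeff_sum_single finite_kempe_class_monomials)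
  next
    case M
    have "u + (Poly_Mapping.single S 1 + Poly_Mapping.single T 1) \<notin> ?X"
      using kempe_class_monomials_no_overlap[OF M(1)] by (simp add: add.assoc)
    then show ?thesis
      unfolding M(2) mon_def by (simp add: mult_single coeff_sum_single finite_kempe_class_monomials)
  qed
qed

lemma kempe_ideal_subset_RG:
  assumes sg: "simple_graph d E"
  shows "(kempe_ideal d E :: 'k::field mpoly set) \<subseteq> RG d E"
  unfolding kempe_ideal_def
proof (rule ideal_gen_RG_subset, rule subsetI)
  fix p :: "'k mpoly" assume "p \<in> J_gens d E \<union> M_gens d E"
  then consider (J) W a a' where "W \<subseteq> {1..d}" "is_coloring E W 2 a" "is_coloring E W 2 a'"
      "p = mon (xcol W 2 a) - mon (xcol W 2 a')"
    | (M) S T where "S \<in> stable_sets d E" "T \<in> stable_sets d E"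
      "p = mon (Poly_Mapping.single S 1 + Poly_Mapping.single T 1)"
    unfolding J_gens_def M_gens_def by blast
  then show "p \<in> RG d E"
  proof cases
    case J
    then show ?thesis
      by (simp add: RG_diff mon_in_RG xcol_in_monomials_RG[OF sg])
  next
    case M
    then have "Poly_Mapping.single S 1 + Poly_Mapping.single T (1::nat) \<in> monomials_RG d E"
      using keys_add[of "Poly_Mapping.single S (1::nat)" "Poly_Mapping.single T 1"]
      unfolding monomials_RG_def by auto
    with M(3) show ?thesis
      by (simp add: mon_in_RG)
  qed
qed

lemma unique_standard_monomial_in_kempe_class:
  fixes K :: "'k::field itself"
  assumes sg: "simple_graph d E" and mo: "monomial_order (monomials_RG d E) lt"
    and g: "is_coloring E {1..d} k g"
  shows "\<exists>!m. m \<in> std_monomials K d E lt k \<and>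
    (\<exists>f. is_coloring E {1..d} k f \<and> m = xcol {1..d} k f \<and> kempe_equiv d E k f g)"
proof -
  let ?X = "kempe_class_monomials d E k g"
  let ?K = "kempe_ideal d E :: 'k mpoly set"
  have X: "(\<exists>f. is_coloring E {1..d} k f \<and> m = xcol {1..d} k f \<and> kempe_equiv d E k f g) \<longleftrightarrow> m \<in> ?X"
    for m
    unfolding kempe_class_monomials_def by blast
  have XM: "?X \<subseteq> monomials_RG d E"
    by (rule kempe_class_monomials_subset[OF sg])
  obtain m0 where m0: "m0 \<in> ?X" and least: "\<forall>m\<in>?X. m \<noteq> m0 \<longrightarrow> lt m0 m"
    using monomial_order_has_least[OF mo finite_kempe_class_monomials _ XM]
      xcol_in_kempe_class_monomials[OF g] by blast
  have null: "coeff_sum ?X (c * p) = 0" if "p \<in> ?K" for c p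
  proof (rule coeff_sum_ideal_gen_eq_0)
    show "p \<in> ideal_gen (RG d E) (J_gens d E \<union> M_gens d E)"
      using that unfolding kempe_ideal_def .
  qed (rule coeff_sum_kempe_class_gen_eq_0)
  have "(mon m0 :: 'k mpoly) \<notin> initial_ideal d E lt ?K"
    by (rule least_notin_initial_ideal_if_coeff_sum_vanishes[OF mo kempe_ideal_subset_RG[OF sg] null
          finite_kempe_class_monomials XM m0 least])
  moreover have "monom_degree m0 = k"
    using m0 monom_degree_xcol unfolding kempe_class_monomials_def by auto
  ultimately have std: "m0 \<in> std_monomials K d E lt k"
    unfolding std_monomials_def using m0 XM by blast
  have "m = m0" if m: "m \<in> ?X" and m_std: "m \<in> std_monomials K d E lt k" for m
  proof (rule ccontr)
    assume "m \<noteq> m0"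
    then have "lt m0 m"
      using least m by blast
    have "(mon m - mon (xcol {1..d} k g)) - (mon m0 - mon (xcol {1..d} k g)) \<in> ?K"
      using kempe_class_monomial_congruent[OF sg m] kempe_class_monomial_congruent[OF sg m0]
      unfolding kempe_ideal_def by (rule ideal_gen_RG_diff)
    then have "mon m - mon m0 \<in> ?K"
      by simp
    moreover have "lead_monom lt (mon m - mon m0 :: 'k mpoly) = m"
      using lead_monom_mon_diff[OF mo _ _ \<open>lt m0 m\<close>] m m0 XM by blast
    moreover have "(mon m - mon m0 :: 'k mpoly) \<noteq> 0"
    proof
      assume "(mon m - mon m0 :: 'k mpoly) = 0"
      then have "Poly_Mapping.lookup (mon m :: 'k mpoly) m = Poly_Mapping.lookup (mon m0) m"
        by simp
      with \<open>m \<noteq> m0\<close> show False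
        by (simp add: mon_def lookup_single)
    qed
    ultimately have "(mon (0 + m) :: 'k mpoly) \<in> initial_ideal d E lt ?K"
      by (metis mon_add_lead_monom_in_initial_ideal zero_in_monomials_RG)
    with m_std show False
      unfolding std_monomials_def by simp
  qed
  with std m0 show ?thesis
    unfolding X by blast
qed

section \<open>Standard monomials are disjoint stable partitions\<close>

lemma overlap_in_initial_kempe_ideal:
  assumes "S \<in> stable_sets d E" "T \<in> stable_sets d E" "S \<inter> T \<noteq> {}" "w \<in> monomials_RG d E"
  shows "(mon (w + Poly_Mapping.single S 1 + Poly_Mapping.single T 1) :: 'k::field mpoly)
    \<in> initial_ideal d E lt (kempe_ideal d E)"
proof -
  define x where "x = Poly_Mapping.single S 1 + Poly_Mapping.single T (1::nat)"
  have "(mon x :: 'k mpoly) \<in> M_gens d E"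
    unfolding M_gens_def x_def using assms(1-3) by blast
  then have "1 * (mon x :: 'k mpoly) \<in> kempe_ideal d E"
    using kempe_ideal_mult_mem one_in_RG by blast
  moreover have "(mon x :: 'k mpoly) \<noteq> 0"
    using keys_single[of x "1::'k"] unfolding mon_def by force
  ultimately have "(mon (w + lead_monom lt (mon x :: 'k mpoly)) :: 'k mpoly) \<in> initial_ideal d E lt (kempe_ideal d E)"
    using mon_add_lead_monom_in_initial_ideal[OF assms(4)] by simp
  then show ?thesis
    unfolding lead_monom_mon x_def by (simp add: add.assoc)
qed

lemma std_monomial_eq_sum_disjoint_stable:
  fixes K :: "'k::field itself"
  assumes m: "m \<in> std_monomials K d E lt k"
  obtains S where "\<forall>l\<in>{1..k}. S l \<in> stable_sets d E"
    "\<forall>l\<in>{1..k}. \<forall>l'\<in>{1..k}. l \<noteq> l' \<longrightarrow> S l \<inter> S l' = {}"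
    "m = (\<Sum>l\<in>{1..k}. Poly_Mapping.single (S l) 1)"
proof -
  have mM: "Poly_Mapping.keys m \<subseteq> stable_sets d E" and "monom_degree m = k"
    and std: "(mon m :: 'k mpoly) \<notin> initial_ideal d E lt (kempe_ideal d E)"
    using m unfolding std_monomials_def monomials_RG_def by auto
  then obtain S where S: "m = (\<Sum>l\<in>{1..k}. Poly_Mapping.single (S l) 1)"
    using monom_eq_sum_single_one by blast
  have stable: "S l \<in> stable_sets d E" if "l \<in> {1..k}" for l
  proof -
    have "Poly_Mapping.lookup m (S l) \<noteq> 0"
      using that unfolding S lookup_sum_single_one[OF finite_atLeastAtMost] by auto
    then show ?thesis
      using mM by (auto simp: in_keys_iff)
  qed
  have "S l \<inter> S l' = {}" if l: "l \<in> {1..k}" "l' \<in> {1..k}" "l \<noteq> l'" for l l'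
  proof (rule ccontr)
    assume overlap: "S l \<inter> S l' \<noteq> {}"
    define w where "w = (\<Sum>i\<in>{1..k} - {l, l'}. Poly_Mapping.single (S i) (1::nat))"
    have "m = w + Poly_Mapping.single (S l) 1 + Poly_Mapping.single (S l') 1"
      unfolding S w_def by (rule sum_remove_two[OF _ l]) simp
    moreover have "w \<in> monomials_RG d E"
      unfolding w_def monomials_RG_def using keys_sum_single_one[of S] stable by blast
    ultimately have "(mon m :: 'k mpoly) \<in> initial_ideal d E lt (kempe_ideal d E)"
      using overlap_in_initial_kempe_ideal[OF stable stable overlap] l by simp
    with std show False ..
  qed
  with stable S show thesis
    using that by blast
qed

lemma disjoint_stable_sets_coloring:
  assumes stable: "\<forall>l\<in>{1..k}. S l \<in> stable_sets d E"
    and disjoint: "\<forall>l\<in>{1..k}. \<forall>l'\<in>{1..k}. l \<noteq> l' \<longrightarrow> S l \<inter> S l' = {}"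
  defines "F \<equiv> \<lambda>v. SOME l. l \<in> {1..k} \<and> v \<in> S l"
  shows "xcol (\<Union>l\<in>{1..k}. S l) k F = (\<Sum>l\<in>{1..k}. Poly_Mapping.single (S l) 1)"
    and "is_coloring E (\<Union>l\<in>{1..k}. S l) k F"
proof -
  have F: "F v = l" if "l \<in> {1..k}" "v \<in> S l" for v l
  proof -
    have "F v \<in> {1..k} \<and> v \<in> S (F v)"
      unfolding F_def by (rule someI[of _ l]) (use that in blast)
    then show ?thesis
      using disjoint that by blast
  qed
  have "color_class (\<Union>l\<in>{1..k}. S l) F l = S l" if "l \<in> {1..k}" for l
    using F that unfolding color_class_def by blast
  then show "xcol (\<Union>l\<in>{1..k}. S l) k F = (\<Sum>l\<in>{1..k}. Poly_Mapping.single (S l) 1)"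
    unfolding xcol_eq_sum_color_class by simp
  show "is_coloring E (\<Union>l\<in>{1..k}. S l) k F"
    unfolding is_coloring_def
  proof (intro conjI ballI impI notI)
    fix v assume "v \<in> (\<Union>l\<in>{1..k}. S l)"
    then show "F v \<in> {1..k}"
      using F by blast
  next
    fix u v assume "u \<in> (\<Union>l\<in>{1..k}. S l)" "v \<in> (\<Union>l\<in>{1..k}. S l)" "{u, v} \<in> E" "F u = F v"
    then obtain l where "l \<in> {1..k}" "{u, v} \<subseteq> S l"
      using F by (metis UN_E empty_subsetI insert_subset)
    with \<open>{u, v} \<in> E\<close> show False
      using stable unfolding stable_sets_def by blast
  qed
qed

lemma std_monomial_is_coloring_monomial:
  fixes K :: "'k::field itself"
  assumes "m \<in> std_monomials K d E lt k"
  shows "\<exists>S::nat \<Rightarrow> nat set. (\<forall>l\<in>{1..k}. S l \<in> stable_sets d E) \<and>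
    (\<forall>l\<in>{1..k}. \<forall>l'\<in>{1..k}. l \<noteq> l' \<longrightarrow> S l \<inter> S l' = {}) \<and>
    m = (\<Sum>l\<in>{1..k}. Poly_Mapping.single (S l) 1) \<and>
    m = xcol (\<Union>l\<in>{1..k}. S l) k (\<lambda>v. SOME l. l \<in> {1..k} \<and> v \<in> S l) \<and>
    is_coloring E (\<Union>l\<in>{1..k}. S l) k (\<lambda>v. SOME l. l \<in> {1..k} \<and> v \<in> S l)"
proof -
  obtain S where S: "\<forall>l\<in>{1..k}. S l \<in> stable_sets d E"
    "\<forall>l\<in>{1..k}. \<forall>l'\<in>{1..k}. l \<noteq> l' \<longrightarrow> S l \<inter> S l' = {}"
    "m = (\<Sum>l\<in>{1..k}. Poly_Mapping.single (S l) 1)"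
    by (rule std_monomial_eq_sum_disjoint_stable[OF assms])
  then show ?thesis
    using disjoint_stable_sets_coloring[OF S(1,2)] by (intro exI[of _ S]) simp
qed

theorem theorem1p2:
  fixes d k :: nat and E :: "nat set set" and lt :: "monom \<Rightarrow> monom \<Rightarrow> bool"
    and K :: "'k::field itself"
  assumes "simple_graph d E" and "k \<ge> 1"
    and "monomial_order (monomials_RG d E) lt"
  shows "(\<forall>m\<in>std_monomials K d E lt k.
            \<exists>S::nat \<Rightarrow> nat set. (\<forall>l\<in>{1..k}. S l \<in> stable_sets d E) \<and>
              (\<forall>l\<in>{1..k}. \<forall>l'\<in>{1..k}. l \<noteq> l' \<longrightarrow> S l \<inter> S l' = {}) \<and>
              m = (\<Sum>l\<in>{1..k}. Poly_Mapping.single (S l) 1) \<and>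
              m = xcol (\<Union>l\<in>{1..k}. S l) k (\<lambda>v. SOME l. l \<in> {1..k} \<and> v \<in> S l) \<and>
              is_coloring E (\<Union>l\<in>{1..k}. S l) k (\<lambda>v. SOME l. l \<in> {1..k} \<and> v \<in> S l))
       \<and> (\<forall>g. is_coloring E {1..d} k g \<longrightarrow>
            (\<exists>!m. m \<in> std_monomials K d E lt k \<and>
                  (\<exists>f. is_coloring E {1..d} k f \<and> m = xcol {1..d} k f \<and> kempe_equiv d E k f g)))"
proof -
  show ?thesis
    by (intro conjI ballI allI impI)
      (erule std_monomial_is_coloring_monomial, erule unique_standard_monomial_in_kempe_class[OF assms(1,3)])
qed

end
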